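(* Let $\Sigma$ be a finite set of tokens, $c$ a context, and $M,M_1,M_2$ arbitrary language models. Then there exists a token $t\in\Sigma$ that is $\ge\sqrt{MAE_c(M_1,M_2)}$-exposed by $M$ over $M_1$ at $c$ or $\ge\sqrt{MAE_c(M_1,M_2)}$-exposed by $M$ over $M_2$ at $c$.
   Context: Let $n=|\Sigma|$. A context is a finite sequence of tokens from $\Sigma$. A language model $M$ assigns to every context $c$ and token $t\in\Sigma$ a probability $p_M(t\mid c)>0$, with $\sum_{t\in\Sigma}p_M(t\mid c)=1$. For $g:\Sigma\to\mathbb{R}_{>0}$, $GM(g(t)):=\exp\big(\tfrac1n\sum_{t\in\Sigma}\log g(t)\big)$. Typical probability: $tp_c(M):=GM(p_M(t\mid c))$; relative probability: $rp_M(t\mid c):=p_M(t\mid c)/tp_c(M)$. Typical probability ratio: $tpr_c(M_1,M_2):=GM\big(\tfrac{p_{M_1}(t\mid c)}{p_{M_2}(t\mid c)}\big)$. A token $t$ is $\alpha$-exposed by $M_1$ over $M_2$ at $c$ if $\frac{p_{M_1}(t\mid c)}{p_{M_2}(t\mid c)\cdot tpr_c(M_1,M_2)}=\alpha$; it is $\ge\alpha$-exposed if it is $\beta$-exposed for some $\beta\ge\alpha$. Mean absolute exposure: $MAE_c(M_1,M_2):=GM\Big(\max\Big(\tfrac{rp_{M_1}(t\mid c)}{rp_{M_2}(t\mid c)},\tfrac{rp_{M_2}(t\mid c)}{rp_{M_1}(t\mid c)}\Big)\Big)$. *)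

theory Defs
  imports Complex_Main
begin

text \<open>Tokens: a finite type 'a (so Sigma = UNIV, nonempty). Contexts: token lists.
A language model is a function M c t = p_M(t | c).\<close>

definition language_model :: "('a::finite list \<Rightarrow> 'a \<Rightarrow> real) \<Rightarrow> bool" where
  "language_model M \<longleftrightarrow> (\<forall>c t. M c t > 0) \<and> (\<forall>c. (\<Sum>t\<in>UNIV. M c t) = 1)"

definition GM :: "('a::finite \<Rightarrow> real) \<Rightarrow> real" where
  "GM g = exp ((1 / real (card (UNIV :: 'a set))) * (\<Sum>t\<in>UNIV. ln (g t)))"

definition tp :: "'a::finite list \<Rightarrow> ('a list \<Rightarrow> 'a \<Rightarrow> real) \<Rightarrow> real" where
  "tp c M = GM (\<lambda>t. M c t)"

definition rp :: "('a::finite list \<Rightarrow> 'a \<Rightarrow> real) \<Rightarrow> 'a \<Rightarrow> 'a list \<Rightarrow> real" where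
  "rp M t c = M c t / tp c M"

definition tpr :: "'a::finite list \<Rightarrow> ('a list \<Rightarrow> 'a \<Rightarrow> real) \<Rightarrow> ('a list \<Rightarrow> 'a \<Rightarrow> real) \<Rightarrow> real" where
  "tpr c M1 M2 = GM (\<lambda>t. M1 c t / M2 c t)"

definition exposed :: "real \<Rightarrow> 'a::finite \<Rightarrow> ('a list \<Rightarrow> 'a \<Rightarrow> real) \<Rightarrow> ('a list \<Rightarrow> 'a \<Rightarrow> real) \<Rightarrow> 'a list \<Rightarrow> bool" where
  "exposed \<alpha> t M1 M2 c \<longleftrightarrow> M1 c t / (M2 c t * tpr c M1 M2) = \<alpha>"

definition ge_exposed :: "real \<Rightarrow> 'a::finite \<Rightarrow> ('a list \<Rightarrow> 'a \<Rightarrow> real) \<Rightarrow> ('a list \<Rightarrow> 'a \<Rightarrow> real) \<Rightarrow> 'a list \<Rightarrow> bool" where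
  "ge_exposed \<alpha> t M1 M2 c \<longleftrightarrow> (\<exists>\<beta>\<ge>\<alpha>. exposed \<beta> t M1 M2 c)"

definition MAE :: "'a::finite list \<Rightarrow> ('a list \<Rightarrow> 'a \<Rightarrow> real) \<Rightarrow> ('a list \<Rightarrow> 'a \<Rightarrow> real) \<Rightarrow> real" where
  "MAE c M1 M2 = GM (\<lambda>t. max (rp M1 t c / rp M2 t c) (rp M2 t c / rp M1 t c))"

end

theory Submission
  imports Defs
begin

text \<open>Since tpr is the quotient of the typical probabilities, t is exposed by M over Mi to
  the degree rp_M(t) / rp_Mi(t). The larger of the two degrees equals
  rp_M(t) * sqrt (max (rp_M1(t) / rp_M2(t)) (rp_M2(t) / rp_M1(t))) / sqrt (rp_M1(t) * rp_M2(t)),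
  whose geometric mean is sqrt (MAE), because the geometric mean is multiplicative and
  relative probabilities have geometric mean 1. Some token is at least the geometric mean.\<close>

lemma ln_GM: "ln (GM g) = (\<Sum>t\<in>UNIV. ln (g t)) / real (card (UNIV :: 'a set))"
  for g :: "'a::finite \<Rightarrow> real"
  unfolding GM_def by simp

lemma GM_pos: "GM g > 0"
  unfolding GM_def by simp

lemma GM_eqI:
  fixes g :: "'a::finite \<Rightarrow> real"
  assumes "x > 0" and "ln x = (\<Sum>t\<in>UNIV. ln (g t)) / real (card (UNIV :: 'a set))"
  shows "GM g = x"
  using assms GM_pos[of g] by (metis ln_GM ln_inj_iff)

lemma GM_const: "x > 0 \<Longrightarrow> GM (\<lambda>_::'a::finite. x) = x"
  by (rule GM_eqI) auto

lemma GM_mult: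
  assumes "\<And>t. f t > 0" and "\<And>t. g t > 0"
  shows "GM (\<lambda>t. f t * g t) = GM f * GM g"
proof (rule GM_eqI)
  have "ln (f t * g t) = ln (f t) + ln (g t)" for t
    using assms[of t] by (simp add: ln_mult_pos)
  then show "ln (GM f * GM g) = (\<Sum>t\<in>UNIV. ln (f t * g t)) / real (card (UNIV :: 'a set))"
    by (simp add: ln_mult_pos GM_pos ln_GM sum.distrib add_divide_distrib)
qed (simp add: GM_pos)

lemma GM_divide:
  assumes "\<And>t. f t > 0" and "\<And>t. g t > 0"
  shows "GM (\<lambda>t. f t / g t) = GM f / GM g"
proof (rule GM_eqI)
  have "ln (f t / g t) = ln (f t) - ln (g t)" for t
    using assms[of t] by (simp add: ln_divide_pos)
  then show "ln (GM f / GM g) = (\<Sum>t\<in>UNIV. ln (f t / g t)) / real (card (UNIV :: 'a set))"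
    by (simp add: ln_divide_pos GM_pos ln_GM sum_subtractf diff_divide_distrib)
qed (simp add: GM_pos)

lemma GM_sqrt:
  assumes "\<And>t. g t > 0"
  shows "GM (\<lambda>t. sqrt (g t)) = sqrt (GM g)"
proof (rule GM_eqI)
  have "(\<Sum>t\<in>UNIV. ln (g t)) = 2 * (\<Sum>t\<in>UNIV. ln (sqrt (g t)))"
    using assms by (simp add: ln_sqrt less_imp_le sum_distrib_left)
  then show "ln (sqrt (GM g)) = (\<Sum>t\<in>UNIV. ln (sqrt (g t))) / real (card (UNIV :: 'a set))"
    by (simp add: ln_sqrt GM_pos less_imp_le ln_GM)
qed (simp add: GM_pos)

lemma ex_GM_le:
  fixes g :: "'a::finite \<Rightarrow> real"
  assumes pos: "\<And>t. g t > 0"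
  shows "\<exists>t. GM g \<le> g t"
proof (rule ccontr)
  assume "\<not> ?thesis"
  then have "ln (g t) < ln (GM g)" for t
    using pos[of t] GM_pos[of g] by (simp add: not_le)
  then have "(\<Sum>t\<in>UNIV. ln (g t)) < (\<Sum>t\<in>(UNIV::'a set). ln (GM g))"
    by (intro sum_strict_mono) auto
  then show False
    by (simp add: ln_GM)
qed

lemma language_model_pos: "language_model M \<Longrightarrow> M c t > 0"
  unfolding language_model_def by blast

lemma rp_pos: "(\<And>t. M c t > 0) \<Longrightarrow> rp M t c > 0"
  unfolding rp_def tp_def by (simp add: GM_pos)

lemma GM_rp:
  assumes "\<And>t. M c t > 0"
  shows "GM (\<lambda>t. rp M t c) = 1"
  unfolding rp_def tp_def using assms GM_pos[of "M c"]
  by (simp add: GM_divide GM_const)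

lemma tpr_eq_tp_divide:
  assumes "\<And>t. M1 c t > 0" and "\<And>t. M2 c t > 0"
  shows "tpr c M1 M2 = tp c M1 / tp c M2"
  unfolding tpr_def tp_def using assms by (rule GM_divide)

lemma exposure_eq_rp_divide:
  assumes "\<And>t. M1 c t > 0" and "\<And>t. M2 c t > 0"
  shows "M1 c t / (M2 c t * tpr c M1 M2) = rp M1 t c / rp M2 t c"
  using assms[of t] GM_pos[of "M1 c"] GM_pos[of "M2 c"]
  unfolding tpr_eq_tp_divide[of M1 c M2, OF assms] rp_def tp_def
  by (simp add: field_simps)

lemma ge_exposed_iff_rp:
  assumes "\<And>t. M1 c t > 0" and "\<And>t. M2 c t > 0"
  shows "ge_exposed \<alpha> t M1 M2 c \<longleftrightarrow> \<alpha> \<le> rp M1 t c / rp M2 t c"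
  unfolding ge_exposed_def exposed_def exposure_eq_rp_divide[of M1 c M2, OF assms] by auto

lemma max_divide_eq_sqrt_max_ratio:
  fixes x a b :: real
  assumes "x \<ge> 0" and "a > 0" and "b > 0"
  shows "max (x / a) (x / b) = x * sqrt (max (a / b) (b / a)) / sqrt (a * b)"
proof -
  have ratio: "max (a / b) (b / a) = max a b / min a b"
  proof (cases "a \<le> b")
    case True
    then have "a / b \<le> 1" "1 \<le> b / a" using assms by auto
    then show ?thesis using True by (simp add: max_def min_def)
  next
    case False
    then have "b / a \<le> 1" "1 \<le> a / b" using assms by auto
    then show ?thesis using False by (simp add: max_def min_def)
  qed
  have "a * b = max a b * min a b"
    by (simp add: max_def min_def)
  then have square: "max a b / min a b / (a * b) = (1 / min a b)\<^sup>2"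
    using assms by (simp add: power2_eq_square)
  have "x * sqrt (max (a / b) (b / a)) / sqrt (a * b) = x * sqrt (max a b / min a b / (a * b))"
    by (simp only: ratio real_sqrt_divide times_divide_eq_right)
  also have "\<dots> = x / min a b"
    using assms by (simp only: square real_sqrt_abs) simp
  also have "\<dots> = max (x / a) (x / b)"
    using assms divide_left_mono[of a b x] divide_left_mono[of b a x]
    by (auto simp: min_def max_def)
  finally show ?thesis ..
qed

theorem theorem1:
  fixes M M1 M2 :: "'a::finite list \<Rightarrow> 'a \<Rightarrow> real" and c :: "'a list"
  assumes "language_model M" and "language_model M1" and "language_model M2"
  shows "\<exists>t. ge_exposed (sqrt (MAE c M1 M2)) t M M1 c \<or> ge_exposed (sqrt (MAE c M1 M2)) t M M2 c"
proof -
  have pos: "\<And>t. M c t > 0" "\<And>t. M1 c t > 0" "\<And>t. M2 c t > 0"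
    using assms by (simp_all add: language_model_pos)
  have rp: "\<And>t. rp M t c > 0" "\<And>t. rp M1 t c > 0" "\<And>t. rp M2 t c > 0"
    using pos by (simp_all add: rp_pos)
  define ratio where "ratio t = max (rp M1 t c / rp M2 t c) (rp M2 t c / rp M1 t c)" for t
  have ratio_pos: "ratio t > 0" for t
    using rp by (simp add: ratio_def less_max_iff_disj)
  define exposure where "exposure t = max (rp M t c / rp M1 t c) (rp M t c / rp M2 t c)" for t
  have exposure_pos: "exposure t > 0" for t
    using rp by (simp add: exposure_def less_max_iff_disj)
  have "exposure = (\<lambda>t. rp M t c * sqrt (ratio t) / sqrt (rp M1 t c * rp M2 t c))"
    unfolding exposure_def ratio_def
    using rp by (simp add: max_divide_eq_sqrt_max_ratio less_imp_le)
  then have "GM exposure =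
      GM (\<lambda>t. rp M t c) * sqrt (GM ratio) / sqrt (GM (\<lambda>t. rp M1 t c) * GM (\<lambda>t. rp M2 t c))"
    using rp ratio_pos by (simp add: GM_divide GM_mult GM_sqrt)
  also have "\<dots> = sqrt (MAE c M1 M2)"
    using pos by (simp add: GM_rp MAE_def ratio_def[abs_def])
  finally obtain t where "sqrt (MAE c M1 M2) \<le> exposure t"
    using ex_GM_le[of exposure] exposure_pos by metis
  then show ?thesis
    unfolding exposure_def
      ge_exposed_iff_rp[of M c M1, OF pos(1,2)] ge_exposed_iff_rp[of M c M2, OF pos(1,3)]
    by (auto simp: le_max_iff_disj)
qed

end
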